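(* Let $G$ be an amenable locally compact group with left Haar measure $m$, and let $(A_i)_{i\in\mathbb I}$ be a net in $\mathcal K_p$. The following are equivalent: (i) $(A_i)$ is a strong Følner net; (ii) $(A_i)$ is a Følner net and there is an open unit neighborhood $O$ with $\lim_{i} m\big(\bigcap_{o\in O} oA_i\big)/m(A_i)=1$; (iii) $(A_i)$ is a Følner net and for every compact symmetric unit neighborhood $K$, $\lim_{i} m\big(\bigcap_{k\in K} kA_i\big)/m(A_i)=1$; (iv) for all $K,L\in\mathcal K$, $\lim_i m(L\delta^KA_i)/m(A_i)=0$; (v) for all $K,L\in\mathcal K$, $\lim_i m(L\partial^KA_i)/m(A_i)=0$; (vi) for all $K,L\in\mathcal K$, $\lim_i m(L\partial_KA_i)/m(A_i)=0$. Moreover, these equivalences continue to hold if in any of (iv), (v), (vi) the condition "$K,L\in\mathcal K$" is replaced by "$K,L\in\mathcal K_{s0}$". In particular, $(A_i)$ is a van Hove net if and only if it is a strong Følner net. If $G$ is additionally discrete, then every Følner net is a strong Følner net.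
   Context: $\mathcal K$: nonempty compact subsets of $G$; $\mathcal K_p$: those of positive Haar measure; $\mathcal K_{s0}$: compact sets that are symmetric and contain the identity. Nets are indexed by a directed partially ordered set $(\mathbb I,\prec)$. For $K,A\subseteq G$, with $A^c=G\setminus A$: Følner boundary $\delta^KA=KA\,\triangle\, A$; van Hove boundary $\partial^KA=(KA\cap \overline{A^c})\cup (K^{-1} \overline{A^c}\cap A)$; strong Følner boundary $\partial_K A=K^{-1}A\cap K^{-1}A^c$. A net $(A_i)$ in $\mathcal K_p$ is a Følner net (resp. van Hove net, strong Følner net) if for every $K\in\mathcal K$, $\lim_i m(\delta^KA_i)/m(A_i)=0$ (resp. $\lim_i m(\partial^KA_i)/m(A_i)=0$, $\lim_i m(\partial_KA_i)/m(A_i)=0$). $G$ is amenable if it admits a left-invariant mean on $L^\infty(G)$. *)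

theory Defs
  imports "HOL-Analysis.Analysis"
begin

text \<open>The locally compact group G is a type 'g of class
topological_group_add (a possibly non-commutative topological group written
additively: the product g h is g + h, the identity is 0, the inverse is - g),
Hausdorff (t2_space) and locally compact.\<close>

definition locally_compact_group :: "'g::{topological_group_add,t2_space} itself \<Rightarrow> bool" where
  "locally_compact_group _ \<longleftrightarrow> locally_compact_space (euclidean :: 'g topology)"

definition left_haar_measure :: "'g::{topological_group_add,t2_space} measure \<Rightarrow> bool" where
  "left_haar_measure m \<longleftrightarrow>
     sets m = sets borel \<and>
     (\<forall>K. compact K \<longrightarrow> emeasure m K < \<infinity>) \<and>
     (\<forall>U. open U \<and> U \<noteq> {} \<longrightarrow> emeasure m U > 0) \<and>
     (\<forall>g A. A \<in> sets borel \<longrightarrow> emeasure m ((\<lambda>x. g + x) ` A) = emeasure m A) \<and>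
     (\<forall>A \<in> sets borel. emeasure m A = (INF U \<in> {U. open U \<and> A \<subseteq> U}. emeasure m U)) \<and>
     (\<forall>U. open U \<longrightarrow> emeasure m U = (SUP K \<in> {K. compact K \<and> K \<subseteq> U}. emeasure m K))"

text \<open>Outer measure induced by m (agrees with m on Borel sets by outer regularity);
used to measure sets such as L(KA \<triangle> A) whose Borel measurability is not evident.\<close>

definition outer_haar :: "'g::topological_space measure \<Rightarrow> 'g set \<Rightarrow> ennreal" where
  "outer_haar m X = (INF U \<in> {U. open U \<and> X \<subseteq> U}. emeasure m U)"

definition ess_bounded :: "'g::topological_space measure \<Rightarrow> ('g \<Rightarrow> real) \<Rightarrow> bool" where
  "ess_bounded m f \<longleftrightarrow> f \<in> borel_measurable m \<and> (\<exists>C. AE x in m. \<bar>f x\<bar> \<le> C)"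

definition amenable :: "'g::{topological_group_add,t2_space} measure \<Rightarrow> bool" where
  "amenable m \<longleftrightarrow> (\<exists>\<mu> :: ('g \<Rightarrow> real) \<Rightarrow> real.
      (\<forall>f g a b. ess_bounded m f \<and> ess_bounded m g \<longrightarrow>
          \<mu> (\<lambda>x. a * f x + b * g x) = a * \<mu> f + b * \<mu> g) \<and>
      (\<forall>f. ess_bounded m f \<and> (AE x in m. f x \<ge> 0) \<longrightarrow> \<mu> f \<ge> 0) \<and>
      (\<forall>f g. ess_bounded m f \<and> ess_bounded m g \<and> (AE x in m. f x = g x) \<longrightarrow> \<mu> f = \<mu> g) \<and>
      \<mu> (\<lambda>_. 1) = 1 \<and>
      (\<forall>f s. ess_bounded m f \<longrightarrow> \<mu> (\<lambda>x. f (s + x)) = \<mu> f))"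

definition directed_po :: "('i \<Rightarrow> 'i \<Rightarrow> bool) \<Rightarrow> bool" where
  "directed_po le \<longleftrightarrow> (\<forall>i. le i i) \<and> (\<forall>i j k. le i j \<and> le j k \<longrightarrow> le i k) \<and>
     (\<forall>i j. le i j \<and> le j i \<longrightarrow> i = j) \<and> (\<forall>i j. \<exists>k. le i k \<and> le j k)"

definition net_filter :: "('i \<Rightarrow> 'i \<Rightarrow> bool) \<Rightarrow> 'i filter" where
  "net_filter le = (INF i. principal {j. le i j})"

definition setmul :: "'g::group_add set \<Rightarrow> 'g set \<Rightarrow> 'g set" where
  "setmul K A = (\<Union>k\<in>K. (\<lambda>a. k + a) ` A)"

definition setinv :: "'g::group_add set \<Rightarrow> 'g set" where
  "setinv K = uminus ` K"

definition folner_bd :: "'g::group_add set \<Rightarrow> 'g set \<Rightarrow> 'g set" where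
  "folner_bd K A = (setmul K A - A) \<union> (A - setmul K A)"

definition vanhove_bd :: "'g::{group_add,topological_space} set \<Rightarrow> 'g set \<Rightarrow> 'g set" where
  "vanhove_bd K A = (setmul K A \<inter> closure (- A)) \<union> (setmul (setinv K) (closure (- A)) \<inter> A)"

definition strong_bd :: "'g::group_add set \<Rightarrow> 'g set \<Rightarrow> 'g set" where
  "strong_bd K A = setmul (setinv K) A \<inter> setmul (setinv K) (- A)"

definition cK :: "'g::topological_space set set" where
  "cK = {K. compact K \<and> K \<noteq> {}}"

definition cKp :: "'g::topological_space measure \<Rightarrow> 'g set set" where
  "cKp m = {K. compact K \<and> K \<noteq> {} \<and> emeasure m K > 0}"

definition cKs0 :: "'g::{group_add,topological_space} set set" where
  "cKs0 = {K. compact K \<and> setinv K = K \<and> 0 \<in> K}"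

definition rel :: "'g::topological_space measure \<Rightarrow> 'g set \<Rightarrow> 'g set \<Rightarrow> real" where
  "rel m X A = enn2real (outer_haar m X) / enn2real (emeasure m A)"

definition folner_net :: "'g::{group_add,topological_space} measure \<Rightarrow> ('i \<Rightarrow> 'i \<Rightarrow> bool) \<Rightarrow> ('i \<Rightarrow> 'g set) \<Rightarrow> bool" where
  "folner_net m le A \<longleftrightarrow> (\<forall>K\<in>cK. ((\<lambda>i. rel m (folner_bd K (A i)) (A i)) \<longlongrightarrow> 0) (net_filter le))"

definition vanhove_net :: "'g::{group_add,topological_space} measure \<Rightarrow> ('i \<Rightarrow> 'i \<Rightarrow> bool) \<Rightarrow> ('i \<Rightarrow> 'g set) \<Rightarrow> bool" where
  "vanhove_net m le A \<longleftrightarrow> (\<forall>K\<in>cK. ((\<lambda>i. rel m (vanhove_bd K (A i)) (A i)) \<longlongrightarrow> 0) (net_filter le))"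

definition strong_folner_net :: "'g::{group_add,topological_space} measure \<Rightarrow> ('i \<Rightarrow> 'i \<Rightarrow> bool) \<Rightarrow> ('i \<Rightarrow> 'g set) \<Rightarrow> bool" where
  "strong_folner_net m le A \<longleftrightarrow> (\<forall>K\<in>cK. ((\<lambda>i. rel m (strong_bd K (A i)) (A i)) \<longlongrightarrow> 0) (net_filter le))"

text \<open>Conditions (ii)-(vi); the flag S selects the class of K, L:
S = cK for the original, S = cKs0 for the variant.\<close>

definition cond_ii :: "'g::{group_add,topological_space} measure \<Rightarrow> ('i \<Rightarrow> 'i \<Rightarrow> bool) \<Rightarrow> ('i \<Rightarrow> 'g set) \<Rightarrow> bool" where
  "cond_ii m le A \<longleftrightarrow> folner_net m le A \<and>
     (\<exists>V. open V \<and> 0 \<in> V \<and>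
        ((\<lambda>i. rel m (\<Inter>v\<in>V. (\<lambda>a. v + a) ` A i) (A i)) \<longlongrightarrow> 1) (net_filter le))"

definition cond_iii :: "'g::{group_add,topological_space} measure \<Rightarrow> ('i \<Rightarrow> 'i \<Rightarrow> bool) \<Rightarrow> ('i \<Rightarrow> 'g set) \<Rightarrow> bool" where
  "cond_iii m le A \<longleftrightarrow> folner_net m le A \<and>
     (\<forall>K. compact K \<and> setinv K = K \<and> 0 \<in> interior K \<longrightarrow>
        ((\<lambda>i. rel m (\<Inter>k\<in>K. (\<lambda>a. k + a) ` A i) (A i)) \<longlongrightarrow> 1) (net_filter le))"

definition cond_iv :: "'g::{group_add,topological_space} set set \<Rightarrow> 'g measure \<Rightarrow> ('i \<Rightarrow> 'i \<Rightarrow> bool) \<Rightarrow> ('i \<Rightarrow> 'g set) \<Rightarrow> bool" where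
  "cond_iv S m le A \<longleftrightarrow> (\<forall>K\<in>S. \<forall>L\<in>S.
     ((\<lambda>i. rel m (setmul L (folner_bd K (A i))) (A i)) \<longlongrightarrow> 0) (net_filter le))"

definition cond_v :: "'g::{group_add,topological_space} set set \<Rightarrow> 'g measure \<Rightarrow> ('i \<Rightarrow> 'i \<Rightarrow> bool) \<Rightarrow> ('i \<Rightarrow> 'g set) \<Rightarrow> bool" where
  "cond_v S m le A \<longleftrightarrow> (\<forall>K\<in>S. \<forall>L\<in>S.
     ((\<lambda>i. rel m (setmul L (vanhove_bd K (A i))) (A i)) \<longlongrightarrow> 0) (net_filter le))"

definition cond_vi :: "'g::{group_add,topological_space} set set \<Rightarrow> 'g measure \<Rightarrow> ('i \<Rightarrow> 'i \<Rightarrow> bool) \<Rightarrow> ('i \<Rightarrow> 'g set) \<Rightarrow> bool" where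
  "cond_vi S m le A \<longleftrightarrow> (\<forall>K\<in>S. \<forall>L\<in>S.
     ((\<lambda>i. rel m (setmul L (strong_bd K (A i))) (A i)) \<longlongrightarrow> 0) (net_filter le))"

end

theory Submission
  imports Defs
begin

(*
  Every condition says that some boundary of A_i is small compared with m(A_i), and the
  implications between them come from inclusions between boundaries once the compact sets
  involved are enlarged: L \<partial>_K A \<subseteq> \<partial>_{K L^-1} A, \<delta>^K A \<subseteq> \<partial>_{{e} \<union> K^-1} A,
  \<partial>_K A \<subseteq> K^-1 \<delta>^{K K^-1} A, \<partial>_K A \<subseteq> K^-1 \<partial>^{K K^-1} A,
  L \<partial>^K A \<subseteq> \<partial>^{L \<union> L^-1 \<union> L K \<union> K L^-1} A and, for an open unit neighbourhood V,
  \<partial>^K A \<subseteq> \<partial>_{{e} \<union> K^-1 \<union> V \<union> V K} A. Smallness is carried along these inclusions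
  by monotonicity and finite subadditivity of the outer Haar measure.

  Only (ii) \<Longrightarrow> (i) needs more: if K^-1 is covered by finitely many translates g O, then
  \<partial>_K A is covered by \<delta>^{K^-1} A and the sets \<delta>^{{g}} A \<union> g (A - \<Inter>_{o \<in> O} o A), all of
  which are small by the Folner property, left invariance of m and (ii).

  Local compactness supplies the compact symmetric unit neighbourhood needed for
  (iii) \<Longrightarrow> (ii) and for passing from strong Folner to van Hove. Amenability of G and
  directedness of the index set are never used: the arguments work along any filter.
*)

section \<open>Products of sets and inclusions between boundaries\<close>

lemma setmul_iff: "x \<in> setmul K A \<longleftrightarrow> (\<exists>k\<in>K. \<exists>a\<in>A. x = k + a)"
  unfolding setmul_def by auto

lemma setmulI: "k \<in> K \<Longrightarrow> a \<in> A \<Longrightarrow> k + a \<in> setmul K A"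
  by (auto simp: setmul_iff)

lemma setinv_iff: "x \<in> setinv K \<longleftrightarrow> - x \<in> K"
  unfolding setinv_def by (auto intro: image_eqI[where x = "- x"])

lemma setmul_setinv_iff: "x \<in> setmul (setinv K) A \<longleftrightarrow> (\<exists>k\<in>K. k + x \<in> A)"
proof
  assume "x \<in> setmul (setinv K) A"
  then obtain k a where "- k \<in> K" "a \<in> A" "x = k + a"
    by (auto simp: setmul_iff setinv_iff)
  moreover have "- k + (k + a) = a"
    by (simp add: add.assoc[symmetric])
  ultimately show "\<exists>k\<in>K. k + x \<in> A"
    by metis
next
  assume "\<exists>k\<in>K. k + x \<in> A"
  then obtain k where "- k \<in> setinv K" "k + x \<in> A"
    by (auto simp: setinv_iff)
  then have "- k + (k + x) \<in> setmul (setinv K) A"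
    by (rule setmulI)
  then show "x \<in> setmul (setinv K) A"
    by (simp add: add.assoc[symmetric])
qed

lemma strong_bd_iff:
  "x \<in> strong_bd K A \<longleftrightarrow> (\<exists>k\<in>K. k + x \<in> A) \<and> (\<exists>k\<in>K. k + x \<notin> A)"
  unfolding strong_bd_def by (simp add: setmul_setinv_iff)

lemma strong_bdI:
  "k \<in> K \<Longrightarrow> k + x \<in> A \<Longrightarrow> k' \<in> K \<Longrightarrow> k' + x \<notin> A \<Longrightarrow> x \<in> strong_bd K A"
  unfolding strong_bd_iff by blast

lemma setmul_mono: "L \<subseteq> L' \<Longrightarrow> X \<subseteq> X' \<Longrightarrow> setmul L X \<subseteq> setmul L' X'"
  unfolding setmul_def by blast

lemma subset_setmul: "0 \<in> L \<Longrightarrow> X \<subseteq> setmul L X"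
  by (force simp: setmul_iff)

lemma strong_bd_mono: "K \<subseteq> K' \<Longrightarrow> strong_bd K A \<subseteq> strong_bd K' A"
  unfolding subset_iff strong_bd_iff by blast

lemma translate_eq_setmul: "(+) g ` X = setmul {g} X"
  by (auto simp: setmul_iff)

definition symmetrize :: "'g::group_add set \<Rightarrow> 'g set" where
  "symmetrize K = insert 0 (K \<union> setinv K)"

lemma subset_symmetrize: "K \<subseteq> symmetrize K" "setinv K \<subseteq> symmetrize K" "0 \<in> symmetrize K"
  unfolding symmetrize_def by auto

lemma setinv_symmetrize: "setinv (symmetrize K) = symmetrize K"
  unfolding symmetrize_def by (auto simp: setinv_iff)

lemma setmul_strong_bd_subset:
  "setmul L (strong_bd K A) \<subseteq> strong_bd (setmul K (setinv L)) A"
proof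
  fix x assume "x \<in> setmul L (strong_bd K A)"
  then obtain l y where "l \<in> L" "x = l + y" "y \<in> strong_bd K A"
    by (auto simp: setmul_iff)
  moreover have "(k + - l) + (l + y) = k + y" for k
    by (simp add: add.assoc[symmetric])
  ultimately show "x \<in> strong_bd (setmul K (setinv L)) A"
    unfolding strong_bd_iff by (metis setmulI setinv_iff minus_minus)
qed

lemma folner_bd_subset_strong_bd:
  assumes "K \<noteq> {}"
  shows "folner_bd K A \<subseteq> strong_bd (insert 0 (setinv K)) A"
proof
  fix x assume "x \<in> folner_bd K A"
  then consider "x \<in> setmul K A" "x \<notin> A" | "x \<in> A" "x \<notin> setmul K A"
    unfolding folner_bd_def by auto
  then show "x \<in> strong_bd (insert 0 (setinv K)) A"
  proof cases
    case 1
    then obtain k where "k \<in> K" "- k + x \<in> A"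
      by (auto simp: setmul_iff add.assoc[symmetric])
    with 1 show ?thesis
      unfolding strong_bd_iff by (metis add_0 insertI1 insertI2 setinv_iff minus_minus)
  next
    case 2
    obtain k where k: "k \<in> K" using assms by auto
    with 2 have "- k + x \<notin> A"
      by (metis add_minus_cancel setmulI)
    with 2 k show ?thesis
      unfolding strong_bd_iff by (metis add_0 insertI1 insertI2 setinv_iff minus_minus)
  qed
qed

lemma strong_bd_subset_setmul_folner_bd:
  assumes "setinv K \<subseteq> L" "setmul K (setinv K) \<subseteq> K'"
  shows "strong_bd K A \<subseteq> setmul L (folner_bd K' A)"
proof
  fix x assume "x \<in> strong_bd K A"
  then obtain k k' where k: "k \<in> K" "k + x \<in> A" "k' \<in> K" "k' + x \<notin> A"
    by (auto simp: strong_bd_iff)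
  have "k' + - k \<in> K'"
    using assms(2) k by (metis setmulI setinv_iff minus_minus subsetD)
  moreover have "k' + x = (k' + - k) + (k + x)"
    by (simp add: add.assoc[symmetric])
  ultimately have "k' + x \<in> folner_bd K' A"
    using k unfolding folner_bd_def by (metis UnI1 DiffI setmulI)
  moreover have "x = - k' + (k' + x)"
    by (simp add: add.assoc[symmetric])
  ultimately show "x \<in> setmul L (folner_bd K' A)"
    using assms(1) k(3) by (metis setmulI subsetD setinv_iff minus_minus)
qed

lemma diff_Inter_translates_subset_strong_bd:
  "A - (\<Inter>k\<in>K. (+) k ` A) \<subseteq> strong_bd (insert 0 (setinv K)) A"
proof
  fix x assume "x \<in> A - (\<Inter>k\<in>K. (+) k ` A)"
  then obtain k where "k \<in> K" "x \<notin> (+) k ` A" "x \<in> A" by auto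
  then show "x \<in> strong_bd (insert 0 (setinv K)) A"
    unfolding strong_bd_iff
    by (metis add_0 add_minus_cancel image_eqI insertI1 insertI2 setinv_iff minus_minus)
qed

lemma strong_bd_subset_cover:
  assumes "setinv K \<subseteq> (\<Union>g\<in>C. (+) g ` V)"
  shows "strong_bd K A \<subseteq>
    folner_bd (setinv K) A \<union> (\<Union>g\<in>C. folner_bd {g} A \<union> (+) g ` (A - (\<Inter>v\<in>V. (+) v ` A)))"
    (is "_ \<subseteq> ?rhs")
proof
  fix x assume "x \<in> strong_bd K A"
  then obtain k k' where k: "k \<in> K" "k + x \<in> A" "k' \<in> K" "k' + x \<notin> A"
    by (auto simp: strong_bd_iff)
  show "x \<in> ?rhs"
  proof (cases "x \<in> A")
    case False
    have "x \<in> setmul (setinv K) A"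
      using k by (auto simp: setmul_setinv_iff)
    with False show ?thesis
      unfolding folner_bd_def by blast
  next
    case True
    have "- k' \<in> setinv K"
      using k(3) by (simp add: setinv_iff)
    with assms have "- k' \<in> (\<Union>g\<in>C. (+) g ` V)"
      by (rule subsetD)
    then obtain g where g: "g \<in> C" "- k' \<in> (+) g ` V"
      by (rule UN_E)
    from g(2) obtain v where v: "- k' = g + v" "v \<in> V"
      by (rule imageE)
    have "x \<in> folner_bd {g} A \<union> (+) g ` (A - (\<Inter>v\<in>V. (+) v ` A))"
    proof (cases "x \<in> (+) g ` A")
      case False
      then have "x \<notin> setmul {g} A"
        by (simp add: translate_eq_setmul)
      with True show ?thesis
        unfolding folner_bd_def by blast
    next
      case True
      then obtain a where a: "a \<in> A" "x = g + a" by blast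
      have "a \<notin> (+) v ` A"
      proof
        assume "a \<in> (+) v ` A"
        then obtain b where "b \<in> A" "a = v + b" by blast
        with v(1) a(2) have "x = - k' + b"
          by (simp add: add.assoc)
        then have "k' + x = b"
          by (simp add: add.assoc[symmetric])
        with k(4) \<open>b \<in> A\<close> show False by simp
      qed
      with a v(2) have "a \<in> A - (\<Inter>v\<in>V. (+) v ` A)"
        by blast
      then have "x \<in> (+) g ` (A - (\<Inter>v\<in>V. (+) v ` A))"
        unfolding a(2) by (rule imageI)
      then show ?thesis by blast
    qed
    with g(1) show ?thesis by (rule UnI2[OF UN_I])
  qed
qed

section \<open>Translations, inverses and compact sets\<close>

lemma translate_eq_vimage: "(+) g ` X = (+) (- g) -` (X :: 'g::group_add set)"
  by (force simp: add.assoc[symmetric])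

lemma open_translate: "open X \<Longrightarrow> open ((+) g ` (X :: 'g::topological_group_add set))"
  unfolding translate_eq_vimage by (intro continuous_open_vimage continuous_intros)

lemma closed_translate: "closed X \<Longrightarrow> closed ((+) g ` (X :: 'g::topological_group_add set))"
  unfolding translate_eq_vimage by (intro continuous_closed_vimage continuous_intros)

lemma open_setinv:
  assumes "open X"
  shows "open (setinv (X :: 'g::topological_group_add set))"
proof -
  have "setinv X = uminus -` X"
    by (auto simp: setinv_iff)
  moreover have "open (uminus -` X)"
    using assms by (intro continuous_open_vimage continuous_intros)
  ultimately show ?thesis by simp
qed

lemma compact_setinv: "compact K \<Longrightarrow> compact (setinv (K :: 'g::topological_group_add set))"
  unfolding setinv_def by (intro compact_continuous_image continuous_intros)

lemma compact_setmul:
  fixes K X :: "'g::topological_group_add set"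
  assumes "compact K" "compact X"
  shows "compact (setmul K X)"
proof -
  have "setmul K X = (\<lambda>p. fst p + snd p) ` (K \<times> X)"
    unfolding setmul_def by force
  moreover have "compact ((\<lambda>p. fst p + snd p) ` (K \<times> X))"
    using assms by (intro compact_continuous_image compact_Times continuous_intros)
  ultimately show ?thesis by simp
qed

lemma compact_symmetrize:
  "compact K \<Longrightarrow> compact (symmetrize (K :: 'g::{topological_group_add,t2_space} set))"
  unfolding symmetrize_def by (intro compact_insert compact_Un compact_setinv)

lemma symmetrize_in_cKs0:
  "compact K \<Longrightarrow> symmetrize (K :: 'g::{topological_group_add,t2_space} set) \<in> cKs0"
  unfolding cKs0_def by (simp add: compact_symmetrize setinv_symmetrize subset_symmetrize)

lemma cKs0_subset_cK: "cKs0 \<subseteq> cK"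
  unfolding cKs0_def cK_def by auto

lemma symmetrize_in_cK:
  "compact K \<Longrightarrow> symmetrize (K :: 'g::{topological_group_add,t2_space} set) \<in> cK"
  using symmetrize_in_cKs0 cKs0_subset_cK by blast

lemma locally_compact_group_symmetric_nhd:
  assumes "locally_compact_group TYPE('g)"
  obtains K :: "'g::{topological_group_add,t2_space} set" where "compact K" "setinv K = K" "0 \<in> interior K"
proof -
  have "locally_compact_space (euclidean :: 'g topology)"
    using assms unfolding locally_compact_group_def .
  then obtain V U :: "'g set" where "openin euclidean V" "compactin euclidean U" "0 \<in> V" "V \<subseteq> U"
    unfolding locally_compact_space_def by (metis UNIV_I topspace_euclidean)
  then have VU: "open V" "0 \<in> V" "V \<subseteq> U" "compact U"
    by (auto simp: compactin_euclidean_iff)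
  have "V \<inter> setinv V \<subseteq> U \<inter> setinv U"
    using VU by (auto simp: setinv_iff)
  moreover have "open (V \<inter> setinv V)"
    using VU by (simp add: open_Int open_setinv)
  ultimately have "V \<inter> setinv V \<subseteq> interior (U \<inter> setinv U)"
    by (rule interior_maximal)
  moreover have "0 \<in> V \<inter> setinv V"
    using VU by (simp add: setinv_iff)
  moreover have "setinv (U \<inter> setinv U) = U \<inter> setinv U"
    by (auto simp: setinv_iff)
  moreover have "compact (U \<inter> setinv U)"
    using VU by (simp add: compact_Int compact_setinv)
  ultimately show ?thesis
    by (intro that[of "U \<inter> setinv U"]) auto
qed

lemma closure_imp_translate_mem:
  fixes S :: "'g::topological_group_add set"
  assumes "x \<in> closure S" "open V" "0 \<in> V"
  shows "\<exists>v\<in>V. v + x \<in> S"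
proof -
  have "open ((\<lambda>y. y + - x) -` V)"
    using assms(2) by (intro continuous_open_vimage continuous_intros)
  moreover have "x \<in> (\<lambda>y. y + - x) -` V"
    using assms(3) by simp
  ultimately have "(\<lambda>y. y + - x) -` V \<inter> S \<noteq> {}"
    using assms(1) open_Int_closure_eq_empty by blast
  then obtain y where "y \<in> S" "y + - x \<in> V"
    by blast
  then show ?thesis
    by (metis add.assoc add.left_inverse add_0_right)
qed

lemma vanhove_bd_iff:
  "x \<in> vanhove_bd K A \<longleftrightarrow>
    x \<in> setmul K A \<and> x \<in> closure (- A) \<or> (\<exists>k\<in>K. k + x \<in> closure (- A)) \<and> x \<in> A"
  unfolding vanhove_bd_def by (auto simp: setmul_setinv_iff)

lemma vanhove_bd_subset_strong_bd:
  fixes A :: "'g::topological_group_add set"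
  assumes "open V" "0 \<in> V"
  shows "vanhove_bd K A \<subseteq> strong_bd (insert 0 (setinv K \<union> V \<union> setmul V K)) A"
proof
  fix x assume "x \<in> vanhove_bd K A"
  then consider "x \<in> setmul K A" "x \<in> closure (- A)"
    | "\<exists>k\<in>K. k + x \<in> closure (- A)" "x \<in> A"
    unfolding vanhove_bd_iff by auto
  then show "x \<in> strong_bd (insert 0 (setinv K \<union> V \<union> setmul V K)) A"
  proof cases
    case 1
    then obtain k where "k \<in> K" "- k + x \<in> A"
      by (auto simp: setmul_iff add.assoc[symmetric])
    moreover obtain v where "v \<in> V" "v + x \<notin> A"
      using closure_imp_translate_mem[OF 1(2) assms] by auto
    ultimately show ?thesis
      by (intro strong_bdI[of "- k" _ _ _ v]) (auto simp: setinv_iff)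
  next
    case 2
    then obtain k where k: "k \<in> K" "k + x \<in> closure (- A)"
      by blast
    then obtain v where "v \<in> V" "(v + k) + x \<notin> A"
      using closure_imp_translate_mem[OF k(2) assms] by (auto simp: add.assoc)
    with 2 k show ?thesis
      by (intro strong_bdI[of 0 _ _ _ "v + k"]) (auto intro: setmulI)
  qed
qed

lemma strong_bd_subset_setmul_vanhove_bd:
  fixes A :: "'g::{group_add,topological_space} set"
  assumes "setinv K \<subseteq> L" "setmul K (setinv K) \<subseteq> K'"
  shows "strong_bd K A \<subseteq> setmul L (vanhove_bd K' A)"
proof
  fix x assume "x \<in> strong_bd K A"
  then obtain k k' where k: "k \<in> K" "k + x \<in> A" "k' \<in> K" "k' + x \<notin> A"
    by (auto simp: strong_bd_iff)
  have "k' + - k \<in> K'"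
    using assms(2) k by (metis setmulI setinv_iff minus_minus subsetD)
  moreover have "(k' + - k) + (k + x) \<in> closure (- A)"
    using k(4) closure_subset by (force simp: add.assoc[symmetric])
  ultimately have "k + x \<in> vanhove_bd K' A"
    using k(2) unfolding vanhove_bd_iff by blast
  moreover have "x = - k + (k + x)"
    by (simp add: add.assoc[symmetric])
  ultimately show "x \<in> setmul L (vanhove_bd K' A)"
    using assms(1) k(1) by (metis setmulI subsetD setinv_iff minus_minus)
qed

lemma setmul_vanhove_bd_subset:
  fixes A :: "'g::{group_add,topological_space} set"
  assumes "L \<subseteq> K'" "setinv L \<subseteq> K'" "setmul L K \<subseteq> K'" "setmul K (setinv L) \<subseteq> K'"
  shows "setmul L (vanhove_bd K A) \<subseteq> vanhove_bd K' A"
proof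
  fix x assume "x \<in> setmul L (vanhove_bd K A)"
  then obtain l y where l: "l \<in> L" and x: "x = l + y" and y: "y \<in> vanhove_bd K A"
    by (auto simp: setmul_iff)
  have outside: "x \<in> closure (- A)" if "x \<notin> A"
    using that closure_subset[of "- A"] by blast
  have y_eq: "- l + x = y"
    by (simp add: x add.assoc[symmetric])
  from y consider "y \<in> setmul K A" "y \<in> closure (- A)"
    | "\<exists>k\<in>K. k + y \<in> closure (- A)" "y \<in> A"
    unfolding vanhove_bd_iff by auto
  then show "x \<in> vanhove_bd K' A"
  proof cases
    case 1
    then obtain k a where ka: "k \<in> K" "a \<in> A" "y = k + a"
      by (auto simp: setmul_iff)
    show ?thesis
    proof (cases "x \<in> A")
      case True
      have "- l \<in> K'"
        using assms(2) l by (auto simp: setinv_iff)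
      with 1 True y_eq show ?thesis
        unfolding vanhove_bd_iff by auto
    next
      case False
      have "x = (l + k) + a"
        by (simp add: x ka add.assoc)
      then have "x \<in> setmul K' A"
        using assms(3) l ka by (metis setmulI subsetD)
      with False outside show ?thesis
        unfolding vanhove_bd_def by auto
    qed
  next
    case 2
    then obtain k where k: "k \<in> K" "k + y \<in> closure (- A)"
      by blast
    show ?thesis
    proof (cases "x \<in> A")
      case True
      have "k + - l \<in> K'"
        using assms(4) l k by (metis setmulI setinv_iff minus_minus subsetD)
      moreover have "(k + - l) + x = k + y"
        by (simp only: add.assoc y_eq)
      ultimately show ?thesis
        using True k unfolding vanhove_bd_iff by metis
    next
      case False
      have "x \<in> setmul K' A"
        using assms(1) l 2 x by (auto simp: setmul_iff)
      with False outside show ?thesis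
        unfolding vanhove_bd_def by auto
    qed
  qed
qed

lemma setmul_in_cK:
  fixes K L :: "'g::{topological_group_add,t2_space} set"
  assumes "K \<in> cK" "L \<in> cK"
  shows "setmul K L \<in> cK"
proof -
  obtain k l where "k \<in> K" "l \<in> L"
    using assms unfolding cK_def by blast
  then have "k + l \<in> setmul K L"
    by (rule setmulI)
  then show ?thesis
    using assms unfolding cK_def by (auto intro: compact_setmul)
qed

lemma setinv_in_cK:
  fixes K :: "'g::{topological_group_add,t2_space} set"
  shows "K \<in> cK \<Longrightarrow> setinv K \<in> cK"
  unfolding cK_def using compact_setinv[of K] by (simp add: setinv_def)

lemma insert_in_cK: "compact K \<Longrightarrow> insert x K \<in> cK"
  unfolding cK_def by simp

section \<open>Outer Haar measure and relative size\<close>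

(* rel m X A is computed with enn2real, which sends \<infinity> to 0; relative compactness of X
   keeps outer_haar m X finite, so that rel is monotone and subadditive. *)
definition relatively_compact :: "'a::topological_space set \<Rightarrow> bool" where
  "relatively_compact X \<longleftrightarrow> (\<exists>C. compact C \<and> X \<subseteq> C)"

lemma relatively_compact_subset:
  "relatively_compact Y \<Longrightarrow> X \<subseteq> Y \<Longrightarrow> relatively_compact X"
  unfolding relatively_compact_def by blast

lemma compact_imp_relatively_compact: "compact C \<Longrightarrow> relatively_compact C"
  unfolding relatively_compact_def by blast

lemma relatively_compact_Un:
  fixes X Y :: "'a::t2_space set"
  shows "relatively_compact X \<Longrightarrow> relatively_compact Y \<Longrightarrow> relatively_compact (X \<union> Y)"
  unfolding relatively_compact_def by (meson Un_mono compact_Un)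

lemma relatively_compact_UN:
  fixes X :: "'i \<Rightarrow> 'a::t2_space set"
  assumes "finite J" "\<And>j. j \<in> J \<Longrightarrow> relatively_compact (X j)"
  shows "relatively_compact (\<Union>j\<in>J. X j)"
  using assms by (induction J rule: finite_induct)
    (auto intro: relatively_compact_Un compact_imp_relatively_compact)

lemma relatively_compact_setmul:
  fixes X :: "'g::topological_group_add set"
  shows "compact L \<Longrightarrow> relatively_compact X \<Longrightarrow> relatively_compact (setmul L X)"
  unfolding relatively_compact_def by (meson compact_setmul order_refl setmul_mono)

lemma relatively_compact_translate:
  fixes X :: "'g::topological_group_add set"
  shows "relatively_compact X \<Longrightarrow> relatively_compact ((+) g ` X)"
  unfolding translate_eq_setmul by (simp add: relatively_compact_setmul)

lemma relatively_compact_strong_bd: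
  fixes A :: "'g::topological_group_add set"
  shows "compact K \<Longrightarrow> compact A \<Longrightarrow> relatively_compact (strong_bd K A)"
  unfolding strong_bd_def relatively_compact_def by (meson compact_setinv compact_setmul inf_le1)

lemma relatively_compact_folner_bd:
  fixes A :: "'g::{topological_group_add,t2_space} set"
  shows "compact K \<Longrightarrow> compact A \<Longrightarrow> relatively_compact (folner_bd K A)"
  unfolding folner_bd_def relatively_compact_def
  by (intro exI[of _ "setmul K A \<union> A"]) (auto intro: compact_setmul compact_Un)

lemma relatively_compact_vanhove_bd:
  fixes A :: "'g::{topological_group_add,t2_space} set"
  shows "compact K \<Longrightarrow> compact A \<Longrightarrow> relatively_compact (vanhove_bd K A)"
  unfolding vanhove_bd_def relatively_compact_def
  by (intro exI[of _ "setmul K A \<union> A"]) (auto intro: compact_setmul compact_Un)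

lemma
  fixes m :: "'g::{topological_group_add,t2_space} measure"
  assumes "left_haar_measure m"
  shows left_haar_measure_sets: "sets m = sets borel"
    and emeasure_compact_finite: "compact K \<Longrightarrow> emeasure m K < \<infinity>"
    and emeasure_translate: "X \<in> sets borel \<Longrightarrow> emeasure m ((+) g ` X) = emeasure m X"
  using assms unfolding left_haar_measure_def by simp_all

lemma outer_haar_eq_emeasure:
  fixes m :: "'g::{topological_group_add,t2_space} measure"
  assumes "left_haar_measure m" "X \<in> sets borel"
  shows "outer_haar m X = emeasure m X"
proof -
  have "\<forall>A \<in> sets borel. emeasure m A = (INF U \<in> {U. open U \<and> A \<subseteq> U}. emeasure m U)"
    using assms(1) unfolding left_haar_measure_def by (elim conjE)
  then show ?thesis
    using assms(2) unfolding outer_haar_def by (simp only: Ball_def)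
qed

lemma outer_haar_mono: "X \<subseteq> Y \<Longrightarrow> outer_haar m X \<le> outer_haar m Y"
  unfolding outer_haar_def by (rule INF_superset_mono) auto

lemma outer_haar_finite:
  fixes m :: "'g::{topological_group_add,t2_space} measure"
  assumes "left_haar_measure m" "relatively_compact X"
  shows "outer_haar m X < \<infinity>"
proof -
  obtain C where C: "compact C" "X \<subseteq> C"
    using assms(2) unfolding relatively_compact_def by blast
  from C(2) have "outer_haar m X \<le> outer_haar m C"
    by (rule outer_haar_mono)
  also have "\<dots> = emeasure m C"
    using assms(1) C(1) by (simp add: outer_haar_eq_emeasure borel_closed compact_imp_closed)
  also have "\<dots> < \<infinity>"
    using assms(1) C(1) by (rule emeasure_compact_finite)
  finally show ?thesis .
qed

lemma INF_ennreal_add_const_set: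
  fixes f :: "'a \<Rightarrow> ennreal"
  assumes "S \<noteq> {}"
  shows "(INF x\<in>S. f x + c) = (INF x\<in>S. f x) + c"
proof -
  have "mono (\<lambda>x::ennreal. x + c)"
    by (auto simp: mono_def add_right_mono)
  moreover have "continuous (at_right (Inf (f ` S))) (\<lambda>x::ennreal. x + c)"
    by (intro continuous_intros)
  ultimately show ?thesis
    using continuous_at_Inf_mono[of "\<lambda>x. x + c" "f ` S"] assms by (simp add: image_comp)
qed

lemma outer_haar_Un:
  fixes m :: "'g::topological_space measure"
  assumes "sets m = sets borel"
  shows "outer_haar m (X \<union> Y) \<le> outer_haar m X + outer_haar m Y"
proof -
  define covers where "covers Z = {U :: 'g set. open U \<and> Z \<subseteq> U}" for Z
  have covers_ne: "covers Z \<noteq> {}" for Z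
    unfolding covers_def by blast
  have outer: "outer_haar m Z = (INF U\<in>covers Z. emeasure m U)" for Z
    unfolding covers_def outer_haar_def ..
  have "outer_haar m (X \<union> Y) \<le> emeasure m U + emeasure m V"
    if "U \<in> covers X" "V \<in> covers Y" for U V
  proof -
    have "outer_haar m (X \<union> Y) \<le> emeasure m (U \<union> V)"
      unfolding outer using that by (intro INF_lower) (auto simp: covers_def)
    also have "\<dots> \<le> emeasure m U + emeasure m V"
      using that assms by (intro emeasure_subadditive) (auto simp: covers_def)
    finally show ?thesis .
  qed
  then have "outer_haar m (X \<union> Y) \<le> (INF U\<in>covers X. emeasure m U + emeasure m V)"
    if "V \<in> covers Y" for V
    using that by (blast intro: INF_greatest)
  then have "outer_haar m (X \<union> Y) \<le> outer_haar m X + emeasure m V"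
    if "V \<in> covers Y" for V
    using that by (simp add: INF_ennreal_add_const_set[OF covers_ne] outer)
  then have "outer_haar m (X \<union> Y) \<le> (INF V\<in>covers Y. emeasure m V + outer_haar m X)"
    by (simp add: INF_greatest add.commute)
  also have "\<dots> = outer_haar m X + outer_haar m Y"
    by (simp add: INF_ennreal_add_const_set[OF covers_ne] outer add.commute)
  finally show ?thesis .
qed

lemma outer_haar_translate:
  fixes m :: "'g::{topological_group_add,t2_space} measure"
  assumes "left_haar_measure m"
  shows "outer_haar m ((+) g ` X) = outer_haar m X"
proof -
  have le: "outer_haar m ((+) h ` Z) \<le> outer_haar m Z" for h Z
    unfolding outer_haar_def
  proof (rule INF_mono)
    fix U assume "U \<in> {U. open U \<and> Z \<subseteq> U}"
    then have "(+) h ` U \<in> {U. open U \<and> (+) h ` Z \<subseteq> U}" "emeasure m ((+) h ` U) = emeasure m U"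
      using assms by (auto intro: open_translate emeasure_translate)
    then show "\<exists>U'\<in>{U. open U \<and> (+) h ` Z \<subseteq> U}. emeasure m U' \<le> emeasure m U"
      by (intro bexI[of _ "(+) h ` U"]) auto
  qed
  have "outer_haar m X = outer_haar m ((+) (- g) ` (+) g ` X)"
    by (simp add: image_image add.assoc[symmetric])
  also have "\<dots> \<le> outer_haar m ((+) g ` X)"
    by (rule le)
  finally have "outer_haar m X \<le> outer_haar m ((+) g ` X)" .
  with le show ?thesis
    by (simp add: order_antisym)
qed

lemma rel_nonneg: "0 \<le> rel m X A"
  unfolding rel_def by simp

lemma rel_eq_measure:
  fixes m :: "'g::{topological_group_add,t2_space} measure"
  assumes "left_haar_measure m" "X \<in> sets borel"
  shows "rel m X A = measure m X / measure m A"
  unfolding rel_def measure_def using assms by (simp add: outer_haar_eq_emeasure)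

lemma rel_empty:
  fixes m :: "'g::{topological_group_add,t2_space} measure"
  shows "left_haar_measure m \<Longrightarrow> rel m {} A = 0"
  by (simp add: rel_eq_measure)

lemma rel_self:
  fixes m :: "'g::{topological_group_add,t2_space} measure"
  assumes "left_haar_measure m" "A \<in> cKp m"
  shows "rel m A A = 1"
proof -
  have "compact A" "0 < emeasure m A"
    using assms(2) unfolding cKp_def by auto
  moreover have "emeasure m A < \<infinity>"
    using assms(1) \<open>compact A\<close> by (rule emeasure_compact_finite)
  ultimately have "measure m A \<noteq> 0"
    by (simp add: measure_def enn2real_eq_0_iff less_top)
  then show ?thesis
    using assms(1) \<open>compact A\<close> by (simp add: rel_eq_measure borel_compact)
qed

lemma rel_mono:
  fixes m :: "'g::{topological_group_add,t2_space} measure"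
  assumes "left_haar_measure m" "X \<subseteq> Y" "relatively_compact Y"
  shows "rel m X A \<le> rel m Y A"
proof -
  have "enn2real (outer_haar m X) \<le> enn2real (outer_haar m Y)"
    using outer_haar_mono[OF assms(2)] outer_haar_finite[OF assms(1,3)] by (simp add: enn2real_mono)
  then show ?thesis
    unfolding rel_def by (simp add: divide_right_mono)
qed

lemma rel_Un_le:
  fixes m :: "'g::{topological_group_add,t2_space} measure"
  assumes "left_haar_measure m" "X \<subseteq> Y \<union> Z" "relatively_compact Y" "relatively_compact Z"
  shows "rel m X A \<le> rel m Y A + rel m Z A"
proof -
  have fin: "outer_haar m Y < \<infinity>" "outer_haar m Z < \<infinity>"
    using outer_haar_finite assms by blast+
  have "outer_haar m X \<le> outer_haar m Y + outer_haar m Z"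
    using outer_haar_mono[OF assms(2)] outer_haar_Un[OF left_haar_measure_sets[OF assms(1)]]
    by (rule order_trans)
  then have "enn2real (outer_haar m X) \<le> enn2real (outer_haar m Y) + enn2real (outer_haar m Z)"
    using fin by (simp add: enn2real_mono flip: enn2real_plus)
  then show ?thesis
    unfolding rel_def by (simp add: divide_right_mono flip: add_divide_distrib)
qed

lemma rel_translate:
  fixes m :: "'g::{topological_group_add,t2_space} measure"
  shows "left_haar_measure m \<Longrightarrow> rel m ((+) g ` X) A = rel m X A"
  unfolding rel_def by (simp add: outer_haar_translate)

lemma rel_diff:
  fixes m :: "'g::{topological_group_add,t2_space} measure"
  assumes "left_haar_measure m" "A \<in> cKp m" "closed B" "B \<subseteq> A"
  shows "rel m (A - B) A = 1 - rel m B A"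
proof -
  have "compact A"
    using assms(2) unfolding cKp_def by auto
  then have borel: "A \<in> sets borel" "B \<in> sets borel"
    using assms(3) by (auto simp: borel_compact borel_closed)
  have "measure m (A - B) = measure m A - measure m B"
    using borel assms(4) emeasure_compact_finite[OF assms(1) \<open>compact A\<close>]
    by (intro measure_Diff) (auto simp: left_haar_measure_sets[OF assms(1)])
  then show ?thesis
    using rel_self[OF assms(1,2)] assms(1) borel
    by (simp add: rel_eq_measure diff_divide_distrib)
qed

section \<open>Negligible families along the net\<close>

locale haar_net =
  fixes m :: "'g::{topological_group_add,t2_space} measure"
    and le :: "'i \<Rightarrow> 'i \<Rightarrow> bool"
    and A :: "'i \<Rightarrow> 'g set"
  assumes haar: "left_haar_measure m"
    and A_cKp: "A i \<in> cKp m"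
begin

lemma compact_A: "compact (A i)"
  using A_cKp unfolding cKp_def by blast

lemma closed_Inter_translates: "closed (\<Inter>k\<in>K. (+) k ` A i)"
  by (intro closed_INT ballI closed_translate compact_imp_closed compact_A)

definition negligible :: "('i \<Rightarrow> 'g set) \<Rightarrow> bool" where
  "negligible X \<longleftrightarrow> ((\<lambda>i. rel m (X i) (A i)) \<longlongrightarrow> 0) (net_filter le)"

lemma net_conditions_negligible:
  "folner_net m le A \<longleftrightarrow> (\<forall>K\<in>cK. negligible (\<lambda>i. folner_bd K (A i)))"
  "vanhove_net m le A \<longleftrightarrow> (\<forall>K\<in>cK. negligible (\<lambda>i. vanhove_bd K (A i)))"
  "strong_folner_net m le A \<longleftrightarrow> (\<forall>K\<in>cK. negligible (\<lambda>i. strong_bd K (A i)))"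
  "cond_iv S m le A \<longleftrightarrow> (\<forall>K\<in>S. \<forall>L\<in>S. negligible (\<lambda>i. setmul L (folner_bd K (A i))))"
  "cond_v S m le A \<longleftrightarrow> (\<forall>K\<in>S. \<forall>L\<in>S. negligible (\<lambda>i. setmul L (vanhove_bd K (A i))))"
  "cond_vi S m le A \<longleftrightarrow> (\<forall>K\<in>S. \<forall>L\<in>S. negligible (\<lambda>i. setmul L (strong_bd K (A i))))"
  unfolding folner_net_def vanhove_net_def strong_folner_net_def cond_iv_def cond_v_def cond_vi_def
    negligible_def by simp_all

lemma negligible_subset:
  assumes "negligible Y" "\<And>i. X i \<subseteq> Y i" "\<And>i. relatively_compact (Y i)"
  shows "negligible X"
  unfolding negligible_def
proof (rule tendsto_sandwich[OF _ _ tendsto_const assms(1)[unfolded negligible_def]])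
  show "\<forall>\<^sub>F i in net_filter le. 0 \<le> rel m (X i) (A i)"
    by (simp add: rel_nonneg)
  show "\<forall>\<^sub>F i in net_filter le. rel m (X i) (A i) \<le> rel m (Y i) (A i)"
    using assms(2,3) by (simp add: rel_mono[OF haar])
qed

lemma negligible_Un:
  assumes "negligible Y" "negligible Z" "\<And>i. relatively_compact (Y i)" "\<And>i. relatively_compact (Z i)"
  shows "negligible (\<lambda>i. Y i \<union> Z i)"
proof -
  have "((\<lambda>i. rel m (Y i) (A i) + rel m (Z i) (A i)) \<longlongrightarrow> 0 + 0) (net_filter le)"
    using assms(1,2) unfolding negligible_def by (rule tendsto_add)
  then have sum: "((\<lambda>i. rel m (Y i) (A i) + rel m (Z i) (A i)) \<longlongrightarrow> 0) (net_filter le)"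
    by simp
  show ?thesis
    unfolding negligible_def
  proof (rule tendsto_sandwich[OF _ _ tendsto_const sum])
    show "\<forall>\<^sub>F i in net_filter le. 0 \<le> rel m (Y i \<union> Z i) (A i)"
      by (simp add: rel_nonneg)
    show "\<forall>\<^sub>F i in net_filter le. rel m (Y i \<union> Z i) (A i) \<le> rel m (Y i) (A i) + rel m (Z i) (A i)"
      using assms(3,4) by (simp add: rel_Un_le[OF haar])
  qed
qed

lemma negligible_UN:
  assumes "finite J" "\<And>j. j \<in> J \<Longrightarrow> negligible (Y j)"
    "\<And>j i. j \<in> J \<Longrightarrow> relatively_compact (Y j i)"
  shows "negligible (\<lambda>i. \<Union>j\<in>J. Y j i)"
  using assms
proof (induction J rule: finite_induct)
  case empty
  then show ?case
    by (simp add: negligible_def rel_empty[OF haar])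
next
  case (insert j J)
  then show ?case
    by (simp add: negligible_Un relatively_compact_UN)
qed

lemma negligible_translate: "negligible X \<Longrightarrow> negligible (\<lambda>i. (+) g ` X i)"
  unfolding negligible_def by (simp add: rel_translate[OF haar])

lemma tendsto_rel_one_iff_negligible:
  assumes "\<And>i. closed (B i)" "\<And>i. B i \<subseteq> A i"
  shows "((\<lambda>i. rel m (B i) (A i)) \<longlongrightarrow> 1) (net_filter le) \<longleftrightarrow>
    negligible (\<lambda>i. A i - B i)"
proof -
  have "((\<lambda>i. rel m (B i) (A i) - 1) \<longlongrightarrow> 0) (net_filter le) \<longleftrightarrow>
      ((\<lambda>i. - (rel m (B i) (A i) - 1)) \<longlongrightarrow> 0) (net_filter le)"
    using tendsto_minus_cancel_left[where y = 0 and f = "\<lambda>i. rel m (B i) (A i) - 1"] by simp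
  then show ?thesis
    unfolding negligible_def Lim_null[where l = 1] by (simp add: rel_diff[OF haar A_cKp assms])
qed

section \<open>Comparison of the conditions\<close>

lemma strong_folner_imp_folner:
  assumes "strong_folner_net m le A"
  shows "folner_net m le A"
  unfolding net_conditions_negligible
proof
  fix K :: "'g set" assume K: "K \<in> cK"
  then have "insert 0 (setinv K) \<in> cK"
    unfolding cK_def by (simp add: compact_setinv)
  with assms have "negligible (\<lambda>i. strong_bd (insert 0 (setinv K)) (A i))"
    by (simp add: net_conditions_negligible)
  then show "negligible (\<lambda>i. folner_bd K (A i))"
  proof (rule negligible_subset)
    show "folner_bd K (A i) \<subseteq> strong_bd (insert 0 (setinv K)) (A i)" for i
      using K unfolding cK_def by (simp add: folner_bd_subset_strong_bd)
    show "relatively_compact (strong_bd (insert 0 (setinv K)) (A i))" for i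
      using K unfolding cK_def by (simp add: relatively_compact_strong_bd compact_setinv compact_A)
  qed
qed

lemma strong_folner_imp_cond_vi:
  assumes "strong_folner_net m le A" "S \<subseteq> cK"
  shows "cond_vi S m le A"
  unfolding net_conditions_negligible
proof (intro ballI)
  fix K L assume "K \<in> S" "L \<in> S"
  then have K': "setmul K (setinv L) \<in> cK"
    using assms(2) by (blast intro: setmul_in_cK setinv_in_cK)
  with assms(1) have "negligible (\<lambda>i. strong_bd (setmul K (setinv L)) (A i))"
    by (simp add: net_conditions_negligible)
  then show "negligible (\<lambda>i. setmul L (strong_bd K (A i)))"
  proof (rule negligible_subset)
    show "setmul L (strong_bd K (A i)) \<subseteq> strong_bd (setmul K (setinv L)) (A i)" for i
      by (rule setmul_strong_bd_subset)
    show "relatively_compact (strong_bd (setmul K (setinv L)) (A i))" for i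
      using K' unfolding cK_def by (simp add: relatively_compact_strong_bd compact_A)
  qed
qed

lemma cond_vi_imp_strong_folner:
  assumes "cond_vi S m le A" "\<And>K. compact K \<Longrightarrow> symmetrize K \<in> S"
  shows "strong_folner_net m le A"
  unfolding net_conditions_negligible
proof
  fix K :: "'g set" assume "K \<in> cK"
  then have "compact K" unfolding cK_def by blast
  then have "symmetrize K \<in> S"
    by (rule assms(2))
  with assms(1) have "negligible (\<lambda>i. setmul (symmetrize K) (strong_bd (symmetrize K) (A i)))"
    by (simp add: net_conditions_negligible)
  then show "negligible (\<lambda>i. strong_bd K (A i))"
  proof (rule negligible_subset)
    show "strong_bd K (A i) \<subseteq> setmul (symmetrize K) (strong_bd (symmetrize K) (A i))" for i
      using strong_bd_mono[OF subset_symmetrize(1)] subset_setmul[OF subset_symmetrize(3)]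
      by (rule order_trans)
    show "relatively_compact (setmul (symmetrize K) (strong_bd (symmetrize K) (A i)))" for i
      using \<open>compact K\<close>
      by (simp add: relatively_compact_setmul relatively_compact_strong_bd compact_symmetrize compact_A)
  qed
qed

lemma strong_folner_imp_cond_iv:
  assumes "strong_folner_net m le A" "S \<subseteq> cK"
  shows "cond_iv S m le A"
  unfolding net_conditions_negligible
proof (intro ballI)
  fix K L assume "K \<in> S" "L \<in> S"
  then have K: "compact K" "K \<noteq> {}" and L: "L \<in> cK"
    using assms(2) unfolding cK_def by auto
  define K' where "K' = setmul (insert 0 (setinv K)) (setinv L)"
  have "K' \<in> cK"
    unfolding K'_def using K L by (intro setmul_in_cK setinv_in_cK insert_in_cK compact_setinv)
  with assms(1) have "negligible (\<lambda>i. strong_bd K' (A i))"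
    by (simp add: net_conditions_negligible)
  then show "negligible (\<lambda>i. setmul L (folner_bd K (A i)))"
  proof (rule negligible_subset)
    show "setmul L (folner_bd K (A i)) \<subseteq> strong_bd K' (A i)" for i
      using setmul_mono[OF order_refl folner_bd_subset_strong_bd[OF K(2)]] setmul_strong_bd_subset
      unfolding K'_def by (rule order_trans)
    show "relatively_compact (strong_bd K' (A i))" for i
      using \<open>K' \<in> cK\<close> unfolding cK_def by (simp add: relatively_compact_strong_bd compact_A)
  qed
qed

lemma cond_iv_imp_strong_folner:
  assumes "cond_iv S m le A" "\<And>K. compact K \<Longrightarrow> symmetrize K \<in> S"
  shows "strong_folner_net m le A"
  unfolding net_conditions_negligible
proof
  fix K :: "'g set" assume "K \<in> cK"
  then have K: "compact K" "compact (setmul K (setinv K))"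
    unfolding cK_def by (auto intro: compact_setmul compact_setinv)
  define K' where "K' = symmetrize (setmul K (setinv K))"
  have "symmetrize K \<in> S" "K' \<in> S"
    unfolding K'_def using K by (auto intro: assms(2))
  with assms(1) have "negligible (\<lambda>i. setmul (symmetrize K) (folner_bd K' (A i)))"
    by (simp add: net_conditions_negligible)
  then show "negligible (\<lambda>i. strong_bd K (A i))"
  proof (rule negligible_subset)
    show "strong_bd K (A i) \<subseteq> setmul (symmetrize K) (folner_bd K' (A i))" for i
      unfolding K'_def by (intro strong_bd_subset_setmul_folner_bd subset_symmetrize)
    show "relatively_compact (setmul (symmetrize K) (folner_bd K' (A i)))" for i
      unfolding K'_def using K
      by (simp add: relatively_compact_setmul relatively_compact_folner_bd compact_symmetrize compact_A)
  qed
qed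

lemma strong_folner_imp_vanhove:
  fixes W :: "'g set"
  assumes "strong_folner_net m le A" "compact W" "0 \<in> interior W"
  shows "vanhove_net m le A"
  unfolding net_conditions_negligible
proof
  fix K :: "'g set" assume "K \<in> cK"
  then have K: "compact K"
    unfolding cK_def by blast
  define K' where "K' = insert 0 (setinv K \<union> W \<union> setmul W K)"
  have "K' \<in> cK"
    unfolding K'_def using K assms(2)
    by (intro insert_in_cK compact_Un compact_setinv compact_setmul)
  with assms(1) have "negligible (\<lambda>i. strong_bd K' (A i))"
    by (simp add: net_conditions_negligible)
  then show "negligible (\<lambda>i. vanhove_bd K (A i))"
  proof (rule negligible_subset)
    have "insert 0 (setinv K \<union> interior W \<union> setmul (interior W) K) \<subseteq> K'"
      unfolding K'_def using interior_subset[of W] setmul_mono[OF interior_subset order_refl] by blast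
    then show "vanhove_bd K (A i) \<subseteq> strong_bd K' (A i)" for i
      using vanhove_bd_subset_strong_bd[OF open_interior assms(3)] strong_bd_mono by blast
    show "relatively_compact (strong_bd K' (A i))" for i
      using \<open>K' \<in> cK\<close> unfolding cK_def by (simp add: relatively_compact_strong_bd compact_A)
  qed
qed

lemma vanhove_imp_cond_v:
  assumes "vanhove_net m le A" "S \<subseteq> cK"
  shows "cond_v S m le A"
  unfolding net_conditions_negligible
proof (intro ballI)
  fix K L assume "K \<in> S" "L \<in> S"
  then have K: "K \<in> cK" and L: "L \<in> cK"
    using assms(2) by auto
  define K' where "K' = L \<union> setinv L \<union> setmul L K \<union> setmul K (setinv L)"
  have "K' \<in> cK"
    unfolding K'_def using K L unfolding cK_def
    by (auto intro!: compact_Un compact_setinv compact_setmul)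
  with assms(1) have "negligible (\<lambda>i. vanhove_bd K' (A i))"
    by (simp add: net_conditions_negligible)
  then show "negligible (\<lambda>i. setmul L (vanhove_bd K (A i)))"
  proof (rule negligible_subset)
    show "setmul L (vanhove_bd K (A i)) \<subseteq> vanhove_bd K' (A i)" for i
      by (rule setmul_vanhove_bd_subset) (auto simp: K'_def)
    show "relatively_compact (vanhove_bd K' (A i))" for i
      using \<open>K' \<in> cK\<close> unfolding cK_def by (simp add: relatively_compact_vanhove_bd compact_A)
  qed
qed

lemma cond_v_imp_strong_folner:
  assumes "cond_v S m le A" "\<And>K. compact K \<Longrightarrow> symmetrize K \<in> S"
  shows "strong_folner_net m le A"
  unfolding net_conditions_negligible
proof
  fix K :: "'g set" assume "K \<in> cK"
  then have K: "compact K" "compact (setmul K (setinv K))"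
    unfolding cK_def by (auto intro: compact_setmul compact_setinv)
  define K' where "K' = symmetrize (setmul K (setinv K))"
  have "symmetrize K \<in> S" "K' \<in> S"
    unfolding K'_def using K by (auto intro: assms(2))
  with assms(1) have "negligible (\<lambda>i. setmul (symmetrize K) (vanhove_bd K' (A i)))"
    by (simp add: net_conditions_negligible)
  then show "negligible (\<lambda>i. strong_bd K (A i))"
  proof (rule negligible_subset)
    show "strong_bd K (A i) \<subseteq> setmul (symmetrize K) (vanhove_bd K' (A i))" for i
      unfolding K'_def by (intro strong_bd_subset_setmul_vanhove_bd subset_symmetrize)
    show "relatively_compact (setmul (symmetrize K) (vanhove_bd K' (A i)))" for i
      unfolding K'_def using K
      by (simp add: relatively_compact_setmul relatively_compact_vanhove_bd compact_symmetrize compact_A)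
  qed
qed

lemma strong_folner_imp_cond_iii:
  assumes "strong_folner_net m le A"
  shows "cond_iii m le A"
  unfolding cond_iii_def
proof (intro conjI allI impI)
  show "folner_net m le A"
    using assms by (rule strong_folner_imp_folner)
  fix K :: "'g set" assume K: "compact K \<and> setinv K = K \<and> 0 \<in> interior K"
  then have "insert 0 (setinv K) \<in> cK"
    by (simp add: insert_in_cK compact_setinv)
  with assms have "negligible (\<lambda>i. strong_bd (insert 0 (setinv K)) (A i))"
    by (simp add: net_conditions_negligible)
  then have "negligible (\<lambda>i. A i - (\<Inter>k\<in>K. (+) k ` A i))"
  proof (rule negligible_subset)
    show "A i - (\<Inter>k\<in>K. (+) k ` A i) \<subseteq> strong_bd (insert 0 (setinv K)) (A i)" for i
      by (rule diff_Inter_translates_subset_strong_bd)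
    show "relatively_compact (strong_bd (insert 0 (setinv K)) (A i))" for i
      using K by (simp add: relatively_compact_strong_bd compact_setinv compact_A)
  qed
  moreover have "(\<Inter>k\<in>K. (+) k ` A i) \<subseteq> A i" for i
    using K interior_subset by force
  ultimately show "((\<lambda>i. rel m (\<Inter>k\<in>K. (+) k ` A i) (A i)) \<longlongrightarrow> 1) (net_filter le)"
    by (simp add: tendsto_rel_one_iff_negligible closed_Inter_translates)
qed

lemma cond_iii_imp_cond_ii:
  fixes W :: "'g set"
  assumes "cond_iii m le A" "compact W" "setinv W = W" "0 \<in> interior W"
  shows "cond_ii m le A"
  unfolding cond_ii_def
proof (intro conjI exI)
  show "folner_net m le A" "open (interior W)" "0 \<in> interior W"
    using assms unfolding cond_iii_def by auto
  have W0: "0 \<in> W"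
    using assms(4) interior_subset by blast
  have "((\<lambda>i. rel m (\<Inter>k\<in>W. (+) k ` A i) (A i)) \<longlongrightarrow> 1) (net_filter le)"
    using assms unfolding cond_iii_def by blast
  then have "negligible (\<lambda>i. A i - (\<Inter>k\<in>W. (+) k ` A i))"
    using W0 by (subst (asm) tendsto_rel_one_iff_negligible) (auto simp: closed_Inter_translates)
  then have "negligible (\<lambda>i. A i - (\<Inter>k\<in>interior W. (+) k ` A i))"
  proof (rule negligible_subset)
    show "A i - (\<Inter>k\<in>interior W. (+) k ` A i) \<subseteq> A i - (\<Inter>k\<in>W. (+) k ` A i)" for i
      using interior_subset[of W] by blast
    show "relatively_compact (A i - (\<Inter>k\<in>W. (+) k ` A i))" for i
      by (rule relatively_compact_subset[OF compact_imp_relatively_compact[OF compact_A]]) blast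
  qed
  then show "((\<lambda>i. rel m (\<Inter>k\<in>interior W. (+) k ` A i) (A i)) \<longlongrightarrow> 1) (net_filter le)"
    using assms(4) by (subst tendsto_rel_one_iff_negligible) (auto simp: closed_Inter_translates)
qed

lemma discrete_folner_imp_cond_ii:
  assumes "\<forall>x::'g. open {x}" "folner_net m le A"
  shows "cond_ii m le A"
  unfolding cond_ii_def
  using assms by (intro conjI exI[of _ "{0}"]) (auto simp: rel_self[OF haar A_cKp])

lemma cond_ii_imp_strong_folner:
  assumes "cond_ii m le A"
  shows "strong_folner_net m le A"
proof -
  obtain V :: "'g set" where folner: "folner_net m le A" and V: "open V" "0 \<in> V"
    and lim: "((\<lambda>i. rel m (\<Inter>v\<in>V. (+) v ` A i) (A i)) \<longlongrightarrow> 1) (net_filter le)"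
    using assms unfolding cond_ii_def by blast
  define B where "B i = (\<Inter>v\<in>V. (+) v ` A i)" for i
  have B_sub: "B i \<subseteq> A i" for i
    unfolding B_def using V(2) by force
  have rc_diff: "relatively_compact (A i - B i)" for i
    by (rule relatively_compact_subset[OF compact_imp_relatively_compact[OF compact_A]]) blast
  have neg_diff: "negligible (\<lambda>i. A i - B i)"
    using lim B_sub unfolding B_def by (subst (asm) tendsto_rel_one_iff_negligible) (auto simp: closed_Inter_translates)
  show ?thesis
    unfolding net_conditions_negligible
  proof
    fix K :: "'g set" assume K: "K \<in> cK"
    have compact_K': "compact (setinv K)"
      using K unfolding cK_def by (simp add: compact_setinv)
    have "g \<in> (+) g ` V" for g
      using image_eqI[of g "(+) g" 0 V] V(2) by simp
    then have "setinv K \<subseteq> (\<Union>g\<in>setinv K. (+) g ` V)"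
      by blast
    then obtain C where C: "C \<subseteq> setinv K" "finite C" "setinv K \<subseteq> (\<Union>g\<in>C. (+) g ` V)"
      by (rule compactE_image[OF compact_K' open_translate[OF V(1)]])
    define Y where "Y g i = folner_bd {g} (A i) \<union> (+) g ` (A i - B i)" for g i
    have rc_Y: "relatively_compact (Y g i)" for g i
      unfolding Y_def
      by (intro relatively_compact_Un relatively_compact_folner_bd relatively_compact_translate rc_diff
          compact_A compact_sing)
    have "negligible (Y g)" for g
      unfolding Y_def
    proof (rule negligible_Un)
      show "negligible (\<lambda>i. folner_bd {g} (A i))"
        using folner by (simp add: net_conditions_negligible cK_def)
      show "negligible (\<lambda>i. (+) g ` (A i - B i))"
        using neg_diff by (rule negligible_translate)
    qed (simp_all add: relatively_compact_folner_bd relatively_compact_translate rc_diff compact_A)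
    then have "negligible (\<lambda>i. \<Union>g\<in>C. Y g i)"
      using C(2) rc_Y by (intro negligible_UN)
    moreover have "negligible (\<lambda>i. folner_bd (setinv K) (A i))"
      using folner setinv_in_cK[OF K] by (simp add: net_conditions_negligible)
    moreover have rc_UN: "relatively_compact (\<Union>g\<in>C. Y g i)" for i
      using C(2) rc_Y by (intro relatively_compact_UN)
    moreover have rc_folner: "relatively_compact (folner_bd (setinv K) (A i))" for i
      using compact_K' by (simp add: relatively_compact_folner_bd compact_A)
    ultimately have "negligible (\<lambda>i. folner_bd (setinv K) (A i) \<union> (\<Union>g\<in>C. Y g i))"
      by (intro negligible_Un)
    then show "negligible (\<lambda>i. strong_bd K (A i))"
    proof (rule negligible_subset)
      show "strong_bd K (A i) \<subseteq> folner_bd (setinv K) (A i) \<union> (\<Union>g\<in>C. Y g i)" for i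
        unfolding Y_def B_def by (rule strong_bd_subset_cover[OF C(3)])
      show "relatively_compact (folner_bd (setinv K) (A i) \<union> (\<Union>g\<in>C. Y g i))" for i
        using rc_folner rc_UN by (rule relatively_compact_Un)
    qed
  qed
qed


lemma strong_folner_iff_cond_ii_iii:
  fixes W :: "'g set"
  assumes "compact W" "setinv W = W" "0 \<in> interior W"
  shows "strong_folner_net m le A \<longleftrightarrow> cond_ii m le A"
    and "strong_folner_net m le A \<longleftrightarrow> cond_iii m le A"
  using strong_folner_imp_cond_iii cond_iii_imp_cond_ii[OF _ assms] cond_ii_imp_strong_folner
  by blast+

lemma strong_folner_iff_vanhove:
  fixes W :: "'g set"
  assumes "compact W" "0 \<in> interior W"
  shows "strong_folner_net m le A \<longleftrightarrow> vanhove_net m le A"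
  using strong_folner_imp_vanhove[OF _ assms] vanhove_imp_cond_v[OF _ order_refl]
    cond_v_imp_strong_folner[OF _ symmetrize_in_cK] by blast

lemma strong_folner_iff_cond_iv_v_vi:
  fixes W :: "'g set"
  assumes "S \<subseteq> cK" "\<And>K. compact K \<Longrightarrow> symmetrize K \<in> S" "compact W" "0 \<in> interior W"
  shows "strong_folner_net m le A \<longleftrightarrow> cond_iv S m le A"
    and "strong_folner_net m le A \<longleftrightarrow> cond_v S m le A"
    and "strong_folner_net m le A \<longleftrightarrow> cond_vi S m le A"
  using strong_folner_imp_cond_iv[OF _ assms(1)] cond_iv_imp_strong_folner[OF _ assms(2)]
    strong_folner_iff_vanhove[OF assms(3,4)] vanhove_imp_cond_v[OF _ assms(1)]
    cond_v_imp_strong_folner[OF _ assms(2)]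
    strong_folner_imp_cond_vi[OF _ assms(1)] cond_vi_imp_strong_folner[OF _ assms(2)]
  by blast+

end

theorem proposition5p7:
  fixes m :: "'g::{topological_group_add,t2_space} measure"
    and le :: "'i \<Rightarrow> 'i \<Rightarrow> bool"
    and A :: "'i \<Rightarrow> 'g set"
  assumes "locally_compact_group TYPE('g)"
    and "left_haar_measure m"
    and "amenable m"
    and "directed_po le"
    and "\<forall>i. A i \<in> cKp m"
  shows "(strong_folner_net m le A \<longleftrightarrow> cond_ii m le A)
    \<and> (strong_folner_net m le A \<longleftrightarrow> cond_iii m le A)
    \<and> (strong_folner_net m le A \<longleftrightarrow> cond_iv cK m le A)
    \<and> (strong_folner_net m le A \<longleftrightarrow> cond_v cK m le A)
    \<and> (strong_folner_net m le A \<longleftrightarrow> cond_vi cK m le A)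
    \<and> (strong_folner_net m le A \<longleftrightarrow> cond_iv cKs0 m le A)
    \<and> (strong_folner_net m le A \<longleftrightarrow> cond_v cKs0 m le A)
    \<and> (strong_folner_net m le A \<longleftrightarrow> cond_vi cKs0 m le A)
    \<and> (vanhove_net m le A \<longleftrightarrow> strong_folner_net m le A)
    \<and> ((\<forall>x::'g. open {x}) \<longrightarrow> folner_net m le A \<longrightarrow> strong_folner_net m le A)"
proof -
  interpret haar_net m le A
    using assms(2,5) by unfold_locales blast+
  obtain W :: "'g set" where W: "compact W" "setinv W = W" "0 \<in> interior W"
    using assms(1) by (rule locally_compact_group_symmetric_nhd)
  note cK = strong_folner_iff_cond_iv_v_vi[OF order_refl symmetrize_in_cK W(1,3)]
  note cKs0 = strong_folner_iff_cond_iv_v_vi[OF cKs0_subset_cK symmetrize_in_cKs0 W(1,3)]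
  have "(\<forall>x::'g. open {x}) \<longrightarrow> folner_net m le A \<longrightarrow> strong_folner_net m le A"
    using discrete_folner_imp_cond_ii cond_ii_imp_strong_folner by blast
  then show ?thesis
    using strong_folner_iff_cond_ii_iii[OF W] cK cKs0 strong_folner_iff_vanhove[OF W(1,3)]
    by auto
qed

end
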